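(* Let $X=\{x_j:j\in J\}\subset\mathbb{R}^2$ be a finite set with $n=|J|$, and let $\mathcal{D}$ be any farthest point Delaunay triangulation of $X$. A point $s\in\mathbb{R}^2$ is the (quadratic) min-power centre of $X$ if and only if there is a face $D$ of $\mathcal{D}$ (a vertex, an edge, or a triangle) such that $s\in\mathrm{int}(T(D))$ and $s\in V_D$.
   Context: For $s\in\mathbb{R}^2$ let $P(s)=\sum_{i\in J}\|s-x_i\|^2+\max_{i\in J}\|s-x_i\|^2$ (Euclidean norm). The min-power centre $s^*$ of $X$ is the unique minimiser of $P$. Let $M=\frac1n\sum_{i\in J}x_i$ be the centroid, and let $T:\mathbb{R}^2\to\mathbb{R}^2$ be the homothety $T(y)=\frac{1}{n+1}(y+nM)$; thus $T(x_j)=M_j:=\frac{1}{n+1}\big(x_j+\sum_{i\in J}x_i\big)$. The farthest point Voronoi diagram of $X$ partitions the plane into regions $V(x_j)=\{s:\|s-x_j\|=\max_{i\in J}\|s-x_i\|\}$. A farthest point Delaunay triangulation of $X$ is a triangulation of (the extreme points of) $X$ such that the circumcircle of every triangle encloses all points of $X$; it is dual to the farthest point Voronoi diagram. For a face $D$ of $\mathcal{D}$ with vertex index set $J_D$, its dual face is $V_D=\bigcap_{j\in J_D}V(x_j)$. $\mathrm{int}(\cdot)$ denotes relative interior of a face, with the convention $\mathrm{int}(\{x\})=\{x\}$ for a single point. *)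

theory Defs
  imports "HOL-Analysis.Analysis"
begin

definition power_fn :: "(real^2) set \<Rightarrow> real^2 \<Rightarrow> real" where
  "power_fn X s = (\<Sum>x\<in>X. (norm (s - x))\<^sup>2) + Max ((\<lambda>x. (norm (s - x))\<^sup>2) ` X)"

definition min_power_centre :: "(real^2) set \<Rightarrow> real^2 \<Rightarrow> bool" where
  "min_power_centre X s \<longleftrightarrow> (\<forall>t. power_fn X s \<le> power_fn X t)"

text \<open>The homothety T(y) = (y + n M)/(n+1), where n M is the sum of the points.\<close>
definition homT :: "(real^2) set \<Rightarrow> real^2 \<Rightarrow> real^2" where
  "homT X y = (1 / (real (card X) + 1)) *\<^sub>R (y + (\<Sum>x\<in>X. x))"

definition far_voronoi :: "(real^2) set \<Rightarrow> real^2 \<Rightarrow> (real^2) set" where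
  "far_voronoi X v = {s. \<forall>x\<in>X. dist s x \<le> dist s v}"

text \<open>A farthest point Delaunay triangulation of X, given as the simplicial complex K
  of its faces (vertex sets of vertices, edges and triangles): faces are nonempty
  affinely independent sets of extreme points of X, closed under nonempty subsets,
  meeting properly; every extreme point is a vertex; the faces cover the convex hull
  of X; and the circumcircle of every triangle encloses all points of X.\<close>
definition fp_delaunay_triangulation :: "(real^2) set \<Rightarrow> (real^2) set set \<Rightarrow> bool" where
  "fp_delaunay_triangulation X K \<longleftrightarrow>
     (\<forall>F\<in>K. F \<noteq> {} \<and> F \<subseteq> {x. x extreme_point_of (convex hull X)} \<and>
              \<not> affine_dependent F \<and> (\<forall>G. G \<noteq> {} \<and> G \<subseteq> F \<longrightarrow> G \<in> K)) \<and>
     (\<forall>F\<in>K. \<forall>G\<in>K. convex hull F \<inter> convex hull G = convex hull (F \<inter> G)) \<and>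
     (\<forall>x. x extreme_point_of (convex hull X) \<longrightarrow> {x} \<in> K) \<and>
     \<Union>((\<lambda>F. convex hull F) ` K) = convex hull X \<and>
     (\<forall>F\<in>K. card F = 3 \<longrightarrow>
        (\<exists>c r. (\<forall>v\<in>F. dist c v = r) \<and> (\<forall>x\<in>X. dist c x \<le> r)))"

end

theory Submission
  imports Defs
begin

text \<open>
  Let \<open>A(s)\<close> be the set of points of \<open>X\<close> farthest from \<open>s\<close>. The convex function \<open>P\<close> is
  minimal at \<open>s\<close> iff \<open>y = (n + 1) s - \<Sum>X\<close>, i.e. the point with \<open>s = T(y)\<close>, lies in
  \<open>conv A(s)\<close>: otherwise a direction separating \<open>y\<close> from \<open>conv A(s)\<close> decreases \<open>P\<close>; and if
  \<open>y = \<Sum> \<lambda>\<^sub>a a\<close> is a convex combination, then \<open>P(t) \<ge> \<Sum>|t - x|\<^sup>2 + \<Sum> \<lambda>\<^sub>a |t - a|\<^sup>2\<close>, a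
  quadratic function of \<open>t\<close> that is minimal at \<open>s\<close> with value \<open>P(s)\<close>.

  Some face \<open>G\<close> with \<open>y \<in> conv G\<close> has a
  circle through its vertices enclosing \<open>X\<close> (a triangle, or in the collinear case the circle
  on the diameter \<open>pq\<close>), while \<open>A(s)\<close> lies on the circle about \<open>s\<close> enclosing \<open>X\<close>. The
  vertices of \<open>G\<close> with positive barycentric weight in \<open>y\<close> then lie on the circle about \<open>s\<close>,
  i.e. belong to \<open>A(s)\<close>, and they span a face \<open>F\<close> with \<open>y\<close> in its relative interior.
\<close>

definition farthest_points :: "'a::metric_space set \<Rightarrow> 'a \<Rightarrow> 'a set" where
  "farthest_points X s = {a\<in>X. \<forall>x\<in>X. dist s x \<le> dist s a}"

lemma farthest_points_subset: "farthest_points X s \<subseteq> X"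
  unfolding farthest_points_def by blast

lemma farthest_points_nonempty:
  assumes "finite X" and "X \<noteq> {}"
  shows "farthest_points X s \<noteq> {}"
proof -
  have "Max (dist s ` X) \<in> dist s ` X"
    using assms by (intro Max_in) auto
  then obtain a where "a \<in> X" and "dist s a = Max (dist s ` X)"
    by (metis imageE)
  then have "a \<in> farthest_points X s"
    using assms(1) by (simp add: farthest_points_def)
  then show ?thesis
    by blast
qed

lemma Max_norm_diff_sq_farthest:
  fixes X :: "'a::real_normed_vector set"
  assumes "finite X" "a \<in> farthest_points X s"
  shows "Max ((\<lambda>x. (norm (s - x))\<^sup>2) ` X) = (norm (s - a))\<^sup>2"
proof (rule Max_eqI)
  show "(norm (s - a))\<^sup>2 \<in> (\<lambda>x. (norm (s - x))\<^sup>2) ` X"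
    using assms(2) farthest_points_subset by blast
qed (use assms in \<open>auto simp: farthest_points_def dist_norm intro!: power_mono\<close>)

lemma sum_weighted_norm_diff_sq:
  fixes s t :: "'a::real_inner"
  shows "(\<Sum>x\<in>X. w x * (norm (t - x))\<^sup>2) = (\<Sum>x\<in>X. w x * (norm (s - x))\<^sup>2)
     + 2 * ((t - s) \<bullet> (sum w X *\<^sub>R s - (\<Sum>x\<in>X. w x *\<^sub>R x))) + sum w X * (norm (t - s))\<^sup>2"
proof -
  have expand: "(norm (t - x))\<^sup>2 = (norm (s - x))\<^sup>2 + 2 * ((t - s) \<bullet> (s - x)) + (norm (t - s))\<^sup>2" for x
    by (simp add: power2_norm_eq_inner inner_commute algebra_simps)
  have "(\<Sum>x\<in>X. w x * (norm (t - x))\<^sup>2) =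
      (\<Sum>x\<in>X. w x * (norm (s - x))\<^sup>2 + 2 * (w x * ((t - s) \<bullet> (s - x))) + w x * (norm (t - s))\<^sup>2)"
  proof (rule sum.cong[OF refl])
    fix x
    show "w x * (norm (t - x))\<^sup>2 = w x * (norm (s - x))\<^sup>2 + 2 * (w x * ((t - s) \<bullet> (s - x))) + w x * (norm (t - s))\<^sup>2"
      unfolding expand[of x] by (simp add: ring_distribs)
  qed
  also have "\<dots> = (\<Sum>x\<in>X. w x * (norm (s - x))\<^sup>2)
     + 2 * (\<Sum>x\<in>X. w x * ((t - s) \<bullet> (s - x))) + sum w X * (norm (t - s))\<^sup>2"
    by (simp add: sum.distrib sum_distrib_left sum_distrib_right)
  also have "(\<Sum>x\<in>X. w x * ((t - s) \<bullet> (s - x))) = (t - s) \<bullet> (sum w X *\<^sub>R s - (\<Sum>x\<in>X. w x *\<^sub>R x))"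
    by (simp add: inner_sum_right sum_subtractf scaleR_sum_left sum_distrib_left sum.distrib algebra_simps)
  finally show ?thesis .
qed

lemma norm_sq_plus_sum_norm_sq_shift:
  fixes s u x :: "'a::real_inner"
  shows "(norm (s + e *\<^sub>R u - x))\<^sup>2 + (\<Sum>z\<in>X. (norm (s + e *\<^sub>R u - z))\<^sup>2)
    = (norm (s - x))\<^sup>2 + (\<Sum>z\<in>X. (norm (s - z))\<^sup>2)
      + e * (2 * (u \<bullet> ((real (card X) + 1) *\<^sub>R s - (\<Sum>z\<in>X. z) - x)))
      + e\<^sup>2 * ((real (card X) + 1) * (norm u)\<^sup>2)"
  using sum_weighted_norm_diff_sq[where w="\<lambda>_. 1" and X=X and t="s + e *\<^sub>R u" and s=s]
    sum_weighted_norm_diff_sq[where w="\<lambda>_. 1" and X="{x}" and t="s + e *\<^sub>R u" and s=s]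
  by (simp add: algebra_simps)

lemma convex_sum_le_Max:
  fixes f :: "'a \<Rightarrow> real"
  assumes "finite X" and "A \<subseteq> X" and "\<forall>a\<in>A. 0 \<le> l a" and "sum l A = 1"
  shows "(\<Sum>a\<in>A. l a * f a) \<le> Max (f ` X)"
proof -
  have "(\<Sum>a\<in>A. l a * f a) \<le> (\<Sum>a\<in>A. l a * Max (f ` X))"
    using assms(1-3) by (intro sum_mono mult_left_mono Max_ge) auto
  then show ?thesis
    using assms(4) by (simp flip: sum_distrib_right)
qed

lemma exists_direction_below_convex_hull:
  fixes w :: "'a::euclidean_space"
  assumes "finite A" and "w \<notin> convex hull A"
  obtains u where "\<And>a. a \<in> A \<Longrightarrow> u \<bullet> (w - a) < 0"
proof -
  have "closed (convex hull A)"
    using assms(1) by (simp add: compact_imp_closed finite_imp_compact_convex_hull)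
  then obtain u b where "u \<bullet> w < b" and "\<forall>z\<in>convex hull A. b < u \<bullet> z"
    using separating_hyperplane_closed_point[OF convex_convex_hull _ assms(2)] by blast
  then have "u \<bullet> (w - a) < 0" if "a \<in> A" for a
    using that hull_inc[of a A] by (fastforce simp: inner_diff_right)
  then show ?thesis
    using that by blast
qed

lemma eventually_at_right_quadratic_less:
  fixes q d k M :: real
  assumes "q \<le> M" and "q = M \<Longrightarrow> d < 0"
  shows "\<forall>\<^sub>F e in at_right 0. q + e * d + e\<^sup>2 * k < M"
proof (cases "q < M")
  case True
  have "((\<lambda>e. q + e * d + e\<^sup>2 * k) \<longlongrightarrow> q + 0 * d + 0\<^sup>2 * k) (at_right 0)"
    by (intro tendsto_intros)
  then show ?thesis
    using True by (auto dest: order_tendstoD(2))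
next
  case False
  then have "q = M" "d < 0"
    using assms by auto
  have "((\<lambda>e. d + e * k) \<longlongrightarrow> d + 0 * k) (at_right 0)"
    by (intro tendsto_intros)
  then have "\<forall>\<^sub>F e in at_right 0. d + e * k < 0"
    using \<open>d < 0\<close> by (auto dest: order_tendstoD(2))
  with eventually_at_right_less[of 0] show ?thesis
  proof eventually_elim
    case (elim e)
    then have "e * (d + e * k) < 0"
      by (simp add: mult_pos_neg)
    then show ?case
      using \<open>q = M\<close> by (simp add: algebra_simps power2_eq_square)
  qed
qed

lemma min_power_centre_imp_in_hull_farthest:
  fixes X :: "(real^2) set"
  assumes fin: "finite X" and ne: "X \<noteq> {}" and opt: "min_power_centre X s"
  shows "(real (card X) + 1) *\<^sub>R s - (\<Sum>x\<in>X. x) \<in> convex hull (farthest_points X s)"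
proof (rule ccontr)
  define w where "w = (real (card X) + 1) *\<^sub>R s - (\<Sum>x\<in>X. x)"
  define A where "A = farthest_points X s"
  assume "\<not> ?thesis"
  then obtain u where descent: "\<And>a. a \<in> A \<Longrightarrow> u \<bullet> (w - a) < 0"
    using exists_direction_below_convex_hull finite_subset[OF farthest_points_subset fin]
    unfolding w_def A_def by blast
  obtain a0 where a0: "a0 \<in> A"
    using farthest_points_nonempty[OF fin ne] A_def by blast
  define M where "M = (norm (s - a0))\<^sup>2"
  define q where "q x e = (norm (s - x))\<^sup>2 + e * (2 * (u \<bullet> (w - x)))
    + e\<^sup>2 * ((real (card X) + 1) * (norm u)\<^sup>2)" for x and e :: real
  have eventually_below: "\<forall>\<^sub>F e in at_right 0. q x e < M" if x: "x \<in> X" for x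
    unfolding q_def
  proof (rule eventually_at_right_quadratic_less)
    have "dist s x \<le> dist s a0"
      using a0 x by (simp add: A_def farthest_points_def)
    then show "(norm (s - x))\<^sup>2 \<le> M"
      by (simp add: M_def dist_norm power_mono)
    assume "(norm (s - x))\<^sup>2 = M"
    then have "dist s x = dist s a0"
      by (simp add: M_def dist_norm)
    then have "x \<in> A"
      using a0 x by (simp add: A_def farthest_points_def)
    then show "2 * (u \<bullet> (w - x)) < 0"
      using descent by simp
  qed
  have "\<forall>\<^sub>F e in at_right 0. \<forall>x\<in>X. q x e < M"
    using eventually_below by (simp add: eventually_ball_finite_distrib[OF fin])
  then obtain e where e: "\<forall>x\<in>X. q x e < M"
    using eventually_happens[of _ "at_right (0::real)"] by auto
  define t where "t = s + e *\<^sub>R u"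
  have "(norm (t - x))\<^sup>2 < M + (\<Sum>z\<in>X. (norm (s - z))\<^sup>2) - (\<Sum>z\<in>X. (norm (t - z))\<^sup>2)"
    if "x \<in> X" for x
    using e that norm_sq_plus_sum_norm_sq_shift[of s e u x X]
    unfolding t_def q_def w_def by (smt (verit))
  then have "Max ((\<lambda>x. (norm (t - x))\<^sup>2) ` X) < M + (\<Sum>z\<in>X. (norm (s - z))\<^sup>2) - (\<Sum>z\<in>X. (norm (t - z))\<^sup>2)"
    using fin ne by simp
  then have "power_fn X t < power_fn X s"
    using Max_norm_diff_sq_farthest[OF fin, of a0 s] a0 by (simp add: power_fn_def M_def A_def)
  with opt show False
    unfolding min_power_centre_def by (meson not_le)
qed

lemma min_power_centre_if_in_hull_farthest:
  fixes X :: "(real^2) set"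
  assumes fin: "finite X"
    and hull: "(real (card X) + 1) *\<^sub>R s - (\<Sum>x\<in>X. x) \<in> convex hull (farthest_points X s)"
  shows "min_power_centre X s"
  unfolding min_power_centre_def
proof
  fix t
  define A where "A = farthest_points X s"
  have AX: "A \<subseteq> X"
    by (simp add: A_def farthest_points_subset)
  then have finA: "finite A"
    using fin by (rule finite_subset)
  obtain l where l0: "\<forall>a\<in>A. 0 \<le> l a" and l1: "sum l A = 1"
    and lw: "(\<Sum>a\<in>A. l a *\<^sub>R a) = (real (card X) + 1) *\<^sub>R s - (\<Sum>x\<in>X. x)"
    using hull convex_hull_finite[OF finA] by (auto simp: A_def)
  obtain a0 where a0: "a0 \<in> A"
    using l1 by force
  have "(norm (s - a))\<^sup>2 = (norm (s - a0))\<^sup>2" if "a \<in> A" for a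
    using a0 that by (simp add: A_def farthest_points_def dist_norm antisym)
  then have "(\<Sum>a\<in>A. l a * (norm (s - a))\<^sup>2) = (\<Sum>a\<in>A. l a) * (norm (s - a0))\<^sup>2"
    by (simp add: sum_distrib_right)
  also have "\<dots> = Max ((\<lambda>x. (norm (s - x))\<^sup>2) ` X)"
    using Max_norm_diff_sq_farthest[OF fin, of a0 s] a0 l1 by (simp add: A_def)
  finally have max_s: "Max ((\<lambda>x. (norm (s - x))\<^sup>2) ` X) = (\<Sum>a\<in>A. l a * (norm (s - a))\<^sup>2)" ..
  have "(real (card X) *\<^sub>R s - (\<Sum>x\<in>X. x)) + (s - (\<Sum>a\<in>A. l a *\<^sub>R a)) = 0"
    using lw by (simp add: algebra_simps)
  then have "(t - s) \<bullet> (real (card X) *\<^sub>R s - (\<Sum>x\<in>X. x)) + (t - s) \<bullet> (s - (\<Sum>a\<in>A. l a *\<^sub>R a)) = 0"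
    by (simp only: inner_add_right[symmetric] inner_zero_right)
  then have "(\<Sum>x\<in>X. (norm (t - x))\<^sup>2) + (\<Sum>a\<in>A. l a * (norm (t - a))\<^sup>2)
      = (\<Sum>x\<in>X. (norm (s - x))\<^sup>2) + (\<Sum>a\<in>A. l a * (norm (s - a))\<^sup>2)
        + (real (card X) + 1) * (norm (t - s))\<^sup>2"
    using sum_weighted_norm_diff_sq[where w="\<lambda>_. 1" and X=X and t=t and s=s]
      sum_weighted_norm_diff_sq[where w=l and X=A and t=t and s=s] l1
    by (simp add: distrib_right)
  moreover have "0 \<le> (real (card X) + 1) * (norm (t - s))\<^sup>2"
    by simp
  moreover have "(\<Sum>a\<in>A. l a * (norm (t - a))\<^sup>2) \<le> Max ((\<lambda>x. (norm (t - x))\<^sup>2) ` X)"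
    by (rule convex_sum_le_Max[OF fin AX l0 l1])
  ultimately show "power_fn X s \<le> power_fn X t"
    unfolding power_fn_def max_s by linarith
qed

lemma min_power_centre_iff_in_hull_farthest:
  fixes X :: "(real^2) set"
  assumes "finite X" and "X \<noteq> {}"
  shows "min_power_centre X s \<longleftrightarrow>
    (real (card X) + 1) *\<^sub>R s - (\<Sum>x\<in>X. x) \<in> convex hull (farthest_points X s)"
  using assms min_power_centre_imp_in_hull_farthest min_power_centre_if_in_hull_farthest by blast

lemma homT_eq_iff: "homT X y = s \<longleftrightarrow> y = (real (card X) + 1) *\<^sub>R s - (\<Sum>x\<in>X. x)"
proof -
  have "real (card X) + 1 \<noteq> 0"
    by simp
  then have "homT X y = s \<longleftrightarrow> y + (\<Sum>x\<in>X. x) = (real (card X) + 1) *\<^sub>R s"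
    unfolding homT_def by (simp only: vector_fraction_eq_iff if_False scaleR_one)
  then show ?thesis
    by (simp only: eq_diff_eq)
qed

lemma rel_interior_homT_image: "rel_interior (homT X ` C) = homT X ` rel_interior C"
proof -
  define c where "c = 1 / (real (card X) + 1)"
  have "c \<noteq> 0"
    by (simp add: c_def add_pos_nonneg)
  then have "inj (\<lambda>z::real^2. c *\<^sub>R z)"
    by (simp add: inj_on_def)
  moreover have "homT X = (\<lambda>z. c *\<^sub>R (\<Sum>x\<in>X. x) + z) \<circ> (\<lambda>z. c *\<^sub>R z)"
    unfolding homT_def c_def by (auto simp: scaleR_add_right)
  ultimately show ?thesis
    by (simp only: image_comp[symmetric] rel_interior_translation
        rel_interior_injective_linear_image[OF bounded_linear_scaleR_right])
qed

lemma rel_interior_convex_hull_support: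
  fixes G :: "'a::euclidean_space set"
  assumes "finite G" and "\<forall>g\<in>G. 0 \<le> b g" and "sum b G = 1"
  shows "(\<Sum>g\<in>G. b g *\<^sub>R g) \<in> rel_interior (convex hull {g\<in>G. 0 < b g})"
proof -
  define F where "F = {g\<in>G. 0 < b g}"
  have sub: "F \<subseteq> G" and fin: "finite F"
    using assms(1) by (auto simp: F_def)
  have zero: "\<forall>g\<in>G - F. b g = 0"
    using assms(2) by (auto simp: F_def not_less)
  have "sum b F = 1"
    using sum.mono_neutral_left[OF assms(1) sub zero] assms(3) by simp
  moreover have "(\<Sum>g\<in>F. b g *\<^sub>R g) = (\<Sum>g\<in>G. b g *\<^sub>R g)"
    using sum.mono_neutral_left[OF assms(1) sub, of "\<lambda>g. b g *\<^sub>R g"] zero by simp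
  moreover have "\<forall>g\<in>F. 0 < b g"
    by (simp add: F_def)
  ultimately show ?thesis
    using explicit_subset_rel_interior_convex_hull_minimal[OF fin] unfolding F_def[symmetric] by blast
qed

lemma convex_combination_affine_inner:
  fixes v :: "'a::real_inner"
  assumes "sum a S = 1"
  shows "(\<Sum>x\<in>S. a x * (k + x \<bullet> v)) = k + (\<Sum>x\<in>S. a x *\<^sub>R x) \<bullet> v"
  using assms by (simp add: distrib_left sum.distrib inner_sum_left flip: sum_distrib_right)

lemma convex_combination_support_on_sphere:
  fixes s c y :: "'a::real_inner"
  assumes A: "finite A" "y \<in> convex hull A" "A \<subseteq> sphere s R" "A \<subseteq> cball c r"
    and G: "finite G" "\<forall>g\<in>G. 0 \<le> b g" "sum b G = 1" "(\<Sum>g\<in>G. b g *\<^sub>R g) = y"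
      "G \<subseteq> sphere c r" "G \<subseteq> cball s R"
  shows "{g\<in>G. 0 < b g} \<subseteq> sphere s R"
proof -
  \<comment> \<open>The quadratic terms of the two power functions cancel, so \<open>L\<close> is affine; it is \<open>\<le> 0\<close>
    on \<open>A\<close> and \<open>\<ge> 0\<close> on \<open>G\<close>, hence vanishes at every vertex of positive weight.\<close>
  define L where "L x = (R\<^sup>2 - (dist s x)\<^sup>2) + ((dist c x)\<^sup>2 - r\<^sup>2)" for x
  define k where "k = R\<^sup>2 - r\<^sup>2 + (norm c)\<^sup>2 - (norm s)\<^sup>2"
  define v where "v = 2 *\<^sub>R (s - c)"
  have L_affine: "L x = k + x \<bullet> v" for x
    unfolding L_def k_def v_def dist_norm
    by (simp add: power2_norm_eq_inner inner_commute algebra_simps)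
  have L_comb: "L (\<Sum>x\<in>S. a x *\<^sub>R x) = (\<Sum>x\<in>S. a x * L x)" if "sum a S = 1" for S a
    unfolding L_affine convex_combination_affine_inner[OF that] ..
  obtain a where a: "\<forall>x\<in>A. 0 \<le> a x" "sum a A = 1" "(\<Sum>x\<in>A. a x *\<^sub>R x) = y"
    using A(1,2) by (auto simp: convex_hull_finite)
  have "L x \<le> 0" if "x \<in> A" for x
  proof -
    have "dist s x = R" "dist c x \<le> r"
      using A(3,4) that by auto
    then show ?thesis
      by (simp add: L_def power_mono)
  qed
  then have "L y \<le> 0"
    using L_comb[OF a(2)] a(1,3) by (auto intro!: sum_nonpos mult_nonneg_nonpos)
  have nonneg: "0 \<le> b g * L g" if "g \<in> G" for g
  proof -
    have "dist s g \<le> R" "dist c g = r"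
      using G(5,6) that by auto
    then show ?thesis
      using G(2) that by (simp add: L_def power_mono)
  qed
  have "L y = (\<Sum>g\<in>G. b g * L g)"
    using L_comb[OF G(3)] unfolding G(4) .
  moreover have "0 \<le> (\<Sum>g\<in>G. b g * L g)"
    using nonneg by (rule sum_nonneg)
  ultimately have "(\<Sum>g\<in>G. b g * L g) = 0"
    using \<open>L y \<le> 0\<close> by linarith
  then have "\<forall>g\<in>G. b g * L g = 0"
    using sum_nonneg_eq_0_iff[OF G(1) nonneg] by simp
  moreover have "dist s g = R \<longleftrightarrow> L g = 0" if "g \<in> G" for g
  proof -
    have "dist s g \<le> R" "dist c g = r"
      using G(5,6) that by auto
    moreover have "0 \<le> R"
      using zero_le_dist \<open>dist s g \<le> R\<close> by (rule order_trans)
    ultimately show ?thesis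
      using power2_eq_iff_nonneg[OF zero_le_dist \<open>0 \<le> R\<close>] by (auto simp: L_def)
  qed
  ultimately show ?thesis
    by auto
qed

lemma exists_subface_on_sphere:
  fixes y :: "'a::euclidean_space"
  assumes "finite A" "y \<in> convex hull A" "A \<subseteq> sphere s R" "A \<subseteq> cball c r"
    and "finite G" "y \<in> convex hull G" "G \<subseteq> sphere c r" "G \<subseteq> cball s R"
  obtains F where "F \<subseteq> G" "y \<in> rel_interior (convex hull F)" "F \<subseteq> sphere s R"
proof -
  obtain b where b: "\<forall>g\<in>G. 0 \<le> b g" "sum b G = 1" "(\<Sum>g\<in>G. b g *\<^sub>R g) = y"
    using assms(5,6) by (auto simp: convex_hull_finite)
  define F where "F = {g\<in>G. 0 < b g}"
  have "y \<in> rel_interior (convex hull F)"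
    using rel_interior_convex_hull_support[OF assms(5) b(1,2)] unfolding b(3) F_def .
  moreover have "F \<subseteq> sphere s R"
    unfolding F_def by (rule convex_combination_support_on_sphere[OF assms(1-5) b assms(7,8)])
  moreover have "F \<subseteq> G"
    by (auto simp: F_def)
  ultimately show ?thesis
    using that by blast
qed

lemma in_open_segment_if_beyond:
  fixes p q :: "'a::real_vector"
  assumes "p \<noteq> q" and "1 < v"
  shows "q \<in> open_segment p ((1 - v) *\<^sub>R p + v *\<^sub>R q)"
proof -
  define x where "x = (1 - v) *\<^sub>R p + v *\<^sub>R q"
  have "x \<noteq> p"
    using assms by (auto simp: x_def algebra_simps)
  moreover have "(1 - 1 / v) *\<^sub>R p + (1 / v) *\<^sub>R x = p + (1 / v * v) *\<^sub>R (q - p)"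
    by (simp add: x_def algebra_simps)
  then have "q = (1 - 1 / v) *\<^sub>R p + (1 / v) *\<^sub>R x"
    using assms(2) by simp
  moreover have "0 < 1 / v" "1 / v < 1"
    using assms(2) by auto
  ultimately show ?thesis
    unfolding x_def[symmetric] in_segment by blast
qed

lemma subset_closed_segment_extreme_points:
  fixes S :: "'a::euclidean_space set"
  assumes "convex S" and "aff_dim S \<le> 1" and p: "p extreme_point_of S" and q: "q extreme_point_of S"
    and "p \<noteq> q"
  shows "S \<subseteq> closed_segment p q"
proof
  fix x assume "x \<in> S"
  have pq: "p \<in> S" "q \<in> S"
    using p q by (auto simp: extreme_point_of_def)
  have hulls: "affine hull {p, q} = affine hull S"
  proof (rule affine_dim_equal)
    show "affine hull {p, q} \<subseteq> affine hull S"
      using pq by (intro hull_mono) auto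
    show "aff_dim (affine hull {p, q}) = aff_dim (affine hull S)"
      using assms(2,5) pq aff_dim_subset[of "{p, q}" S] by simp
  qed auto
  have "x \<in> affine hull {p, q}"
    unfolding hulls using \<open>x \<in> S\<close> by (rule hull_inc)
  then obtain u v where "u + v = 1" "x = u *\<^sub>R p + v *\<^sub>R q"
    unfolding affine_hull_2 by blast
  then have x: "x = (1 - v) *\<^sub>R p + v *\<^sub>R q"
    by (simp add: eq_diff_eq)
  have "\<not> 1 < v"
    using in_open_segment_if_beyond[OF \<open>p \<noteq> q\<close>] q \<open>x \<in> S\<close> pq x
    by (auto simp: extreme_point_of_def)
  moreover have "\<not> v < 0"
  proof
    assume "v < 0"
    have "x = (1 - (1 - v)) *\<^sub>R q + (1 - v) *\<^sub>R p"
      using x by (simp add: algebra_simps)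
    then show False
      using in_open_segment_if_beyond[of q p "1 - v"] \<open>p \<noteq> q\<close> \<open>v < 0\<close> p \<open>x \<in> S\<close> pq
      by (auto simp: extreme_point_of_def)
  qed
  ultimately show "x \<in> closed_segment p q"
    unfolding x in_segment by (intro exI[of _ v]) auto
qed

lemma aff_dim_lt_DIM_if_empty_interior:
  fixes S :: "'a::euclidean_space set"
  assumes "convex S" and "interior S = {}"
  shows "aff_dim S < DIM('a)"
proof (cases "S = {}")
  case False
  then have "rel_interior S \<noteq> {}"
    using assms(1) rel_interior_eq_empty by blast
  then have "aff_dim S \<noteq> DIM('a)"
    using assms(2) interior_rel_interior_gen[of S] by auto
  then show ?thesis
    using aff_dim_le_DIM[of S] by linarith
qed simp

lemma closed_segment_subset_cball_midpoint:
  fixes p q :: "'a::real_normed_vector"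
  shows "closed_segment p q \<subseteq> cball (midpoint p q) (dist p q / 2)"
  by (rule closed_segment_subset) (simp_all add: dist_midpoint)

lemma negligible_convex_hull_card_le_DIM:
  fixes F :: "'a::euclidean_space set"
  assumes "finite F" and "card F \<le> DIM('a)"
  shows "negligible (convex hull F)"
  using empty_interior_convex_hull[OF assms] by (simp add: negligible_convex_interior)

lemma subset_Union_full_simplices:
  fixes \<K> :: "'a::euclidean_space set set"
  assumes fin: "finite \<K>" and indep: "\<And>F. F \<in> \<K> \<Longrightarrow> \<not> affine_dependent F"
    and cover: "\<Union>((\<lambda>F. convex hull F) ` \<K>) = S" and "convex S" and "interior S \<noteq> {}"
  shows "S \<subseteq> \<Union>((\<lambda>F. convex hull F) ` {F\<in>\<K>. card F = DIM('a) + 1})"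
    (is "_ \<subseteq> ?T")
proof -
  \<comment> \<open>The lower-dimensional simplices form a null set, so the closed union of the full ones
    contains the interior of \<open>S\<close>, hence its closure.\<close>
  define E where "E = \<Union>((\<lambda>F. convex hull F) ` {F\<in>\<K>. card F \<noteq> DIM('a) + 1})"
  have finite_simplex: "finite F" if "F \<in> \<K>" for F
    using indep[OF that] by (rule aff_independent_finite)
  have "negligible E"
    unfolding E_def
  proof (intro negligible_Union ballI)
    fix C assume "C \<in> (\<lambda>F. convex hull F) ` {F\<in>\<K>. card F \<noteq> DIM('a) + 1}"
    then obtain F where F: "F \<in> \<K>" "card F \<noteq> DIM('a) + 1" "C = convex hull F"
      by blast
    have "card F \<le> DIM('a)"
      using affine_dependent_biggerset[OF finite_simplex[OF F(1)]] indep[OF F(1)] F(2) by fastforce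
    then show "negligible C"
      using negligible_convex_hull_card_le_DIM[OF finite_simplex[OF F(1)]] F(3) by simp
  qed (use fin in simp)
  have "closed ?T"
    using fin finite_simplex
    by (intro closed_Union) (auto intro!: compact_imp_closed finite_imp_compact_convex_hull)
  have "interior S - ?T \<subseteq> E"
  proof
    fix x assume x: "x \<in> interior S - ?T"
    then obtain F where "F \<in> \<K>" "x \<in> convex hull F"
      using cover interior_subset by blast
    then show "x \<in> E"
      using x unfolding E_def by blast
  qed
  then have "negligible (interior S - ?T)"
    using \<open>negligible E\<close> negligible_subset by blast
  moreover have "open (interior S - ?T)"
    using \<open>closed ?T\<close> by (intro open_Diff open_interior)
  ultimately have "interior S - ?T = {}"
    using open_not_negligible by blast
  then have "closure (interior S) \<subseteq> ?T"
    using \<open>closed ?T\<close> by (simp add: closure_minimal)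
  moreover have "S \<subseteq> closure (interior S)"
    using convex_closure_interior[OF \<open>convex S\<close> \<open>interior S \<noteq> {}\<close>] closure_subset by blast
  ultimately show ?thesis
    by blast
qed

lemma fp_delaunay_faceD:
  assumes "fp_delaunay_triangulation X K" and "F \<in> K"
  shows "F \<noteq> {}" and "\<not> affine_dependent F" and "\<And>G. G \<noteq> {} \<Longrightarrow> G \<subseteq> F \<Longrightarrow> G \<in> K"
    and "\<And>v. v \<in> F \<Longrightarrow> v extreme_point_of (convex hull X)"
proof -
  have "F \<noteq> {} \<and> F \<subseteq> {x. x extreme_point_of (convex hull X)} \<and> \<not> affine_dependent F
      \<and> (\<forall>G. G \<noteq> {} \<and> G \<subseteq> F \<longrightarrow> G \<in> K)"
    using assms unfolding fp_delaunay_triangulation_def by (elim conjE) (erule bspec)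
  then show "F \<noteq> {}" and "\<not> affine_dependent F" and "\<And>G. G \<noteq> {} \<Longrightarrow> G \<subseteq> F \<Longrightarrow> G \<in> K"
    and "\<And>v. v \<in> F \<Longrightarrow> v extreme_point_of (convex hull X)"
    by auto
qed

lemma fp_delaunay_face_subset:
  assumes "fp_delaunay_triangulation X K" and "F \<in> K"
  shows "F \<subseteq> X"
  using fp_delaunay_faceD(4)[OF assms] extreme_point_of_convex_hull by blast

lemma fp_delaunay_cover:
  assumes "fp_delaunay_triangulation X K"
  shows "\<Union>((\<lambda>F. convex hull F) ` K) = convex hull X"
  using assms unfolding fp_delaunay_triangulation_def by (elim conjE)

lemma fp_delaunay_triangle_circle:
  assumes "fp_delaunay_triangulation X K" and "F \<in> K" and "card F = 3"
  obtains c r where "F \<subseteq> sphere c r" and "X \<subseteq> cball c r"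
proof -
  have "\<forall>F\<in>K. card F = 3 \<longrightarrow> (\<exists>c r. (\<forall>v\<in>F. dist c v = r) \<and> (\<forall>x\<in>X. dist c x \<le> r))"
    using assms(1) unfolding fp_delaunay_triangulation_def by (elim conjE)
  then show ?thesis
    using assms(2,3) that by (fastforce simp: subset_iff)
qed

lemma fp_delaunay_face_enclosing_circle:
  fixes X :: "(real^2) set"
  assumes fin: "finite X" and D: "fp_delaunay_triangulation X K" and y: "y \<in> convex hull X"
  obtains G c r where "G \<in> K" "y \<in> convex hull G" "G \<subseteq> sphere c r" "X \<subseteq> cball c r"
  | "{y} \<in> K" "y extreme_point_of (convex hull X)"
proof (cases "interior (convex hull X) = {}")
  case False
  have "finite K"
    using fin fp_delaunay_face_subset[OF D] by (meson PowI finite_Pow_iff finite_subset subsetI)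
  then have "convex hull X \<subseteq> \<Union>((\<lambda>F. convex hull F) ` {F\<in>K. card F = 3})"
    using subset_Union_full_simplices[OF _ fp_delaunay_faceD(2)[OF D] fp_delaunay_cover[OF D]] False
    by simp
  then obtain G where "G \<in> K" "card G = 3" "y \<in> convex hull G"
    using y by blast
  then show ?thesis
    using fp_delaunay_triangle_circle[OF D] that(1) by metis
next
  case True
  obtain G where G: "G \<in> K" "y \<in> convex hull G"
    using y fp_delaunay_cover[OF D] by blast
  have "finite G"
    using fp_delaunay_faceD(2)[OF D G(1)] by (rule aff_independent_finite)
  then have "card G \<noteq> 0" "card G \<le> 3"
    using fp_delaunay_faceD(1,2)[OF D G(1)] affine_dependent_biggerset[of G] by force+
  then consider "card G = 1" | "card G = 2" | "card G = 3"
    by linarith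
  then show ?thesis
  proof cases
    case 1
    then obtain p where "G = {p}"
      by (rule card_1_singletonE)
    then show ?thesis
      using G fp_delaunay_faceD(4)[OF D G(1)] that(2) by simp
  next
    case 2
    then obtain p q where pq: "G = {p, q}" "p \<noteq> q"
      by (auto simp: card_2_iff)
    then have ext: "p extreme_point_of (convex hull X)" "q extreme_point_of (convex hull X)"
      using fp_delaunay_faceD(4)[OF D G(1)] by auto
    have "aff_dim (convex hull X) \<le> 1"
      using aff_dim_lt_DIM_if_empty_interior[OF convex_convex_hull True] by simp
    then have "convex hull X \<subseteq> closed_segment p q"
      by (rule subset_closed_segment_extreme_points[OF convex_convex_hull _ ext pq(2)])
    then have "X \<subseteq> cball (midpoint p q) (dist p q / 2)"
      using hull_subset[of X convex] closed_segment_subset_cball_midpoint[of p q] by blast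
    moreover have "G \<subseteq> sphere (midpoint p q) (dist p q / 2)"
      using pq(1) by (simp add: dist_midpoint)
    ultimately show ?thesis
      using G that(1) by blast
  next
    case 3
    then show ?thesis
      using G fp_delaunay_triangle_circle[OF D] that(1) by metis
  qed
qed

lemma fp_delaunay_face_of_farthest:
  fixes X :: "(real^2) set"
  assumes fin: "finite X" and D: "fp_delaunay_triangulation X K"
    and y: "y \<in> convex hull (farthest_points X s)"
  shows "\<exists>F\<in>K. y \<in> rel_interior (convex hull F) \<and> F \<subseteq> farthest_points X s"
proof -
  define A where "A = farthest_points X s"
  have AX: "A \<subseteq> X"
    by (simp add: A_def farthest_points_subset)
  then have finA: "finite A"
    using fin by (rule finite_subset)
  have "A \<noteq> {}"
    using y by (auto simp: A_def)
  then obtain a0 where a0: "a0 \<in> A"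
    by blast
  have A_sphere: "A \<subseteq> sphere s (dist s a0)" and X_cball: "X \<subseteq> cball s (dist s a0)"
    using a0 by (auto simp: A_def farthest_points_def intro!: order.antisym)
  have hull_AX: "convex hull A \<subseteq> convex hull X"
    using AX by (rule hull_mono)
  then have "y \<in> convex hull X"
    using y by (auto simp: A_def)
  then consider (circle) G c r where "G \<in> K" "y \<in> convex hull G" "G \<subseteq> sphere c r" "X \<subseteq> cball c r"
    | (vertex) "{y} \<in> K" "y extreme_point_of (convex hull X)"
    by (rule fp_delaunay_face_enclosing_circle[OF fin D])
  then show ?thesis
  proof cases
    case circle
    have GX: "G \<subseteq> X"
      by (rule fp_delaunay_face_subset[OF D circle(1)])
    have "finite G"
      using fp_delaunay_faceD(2)[OF D circle(1)] by (rule aff_independent_finite)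
    then obtain F where F: "F \<subseteq> G" "y \<in> rel_interior (convex hull F)" "F \<subseteq> sphere s (dist s a0)"
      using exists_subface_on_sphere[OF finA y[folded A_def] A_sphere _ _ circle(2,3)]
        AX GX circle(4) X_cball by blast
    then have "F \<noteq> {}"
      by auto
    then have "F \<in> K"
      using fp_delaunay_faceD(3)[OF D circle(1)] F(1) by blast
    moreover have "F \<subseteq> A"
      using F(1,3) GX a0 by (auto simp: A_def farthest_points_def)
    ultimately show ?thesis
      using F(2) by (auto simp: A_def)
  next
    case vertex
    then have "y extreme_point_of (convex hull A)"
      using y hull_AX unfolding extreme_point_of_def A_def by blast
    then have "y \<in> A"
      by (rule extreme_point_of_convex_hull)
    then show ?thesis
      using vertex(1) by (intro bexI[of _ "{y}"]) (auto simp: A_def)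
  qed
qed

theorem theorem1:
  fixes X :: "(real^2) set" and K :: "(real^2) set set" and s :: "real^2"
  assumes "finite X" and "X \<noteq> {}" and "fp_delaunay_triangulation X K"
  shows "min_power_centre X s \<longleftrightarrow>
           (\<exists>F\<in>K. s \<in> rel_interior (homT X ` (convex hull F)) \<and>
                   s \<in> (\<Inter>v\<in>F. far_voronoi X v))"
proof -
  define w where "w = (real (card X) + 1) *\<^sub>R s - (\<Sum>x\<in>X. x)"
  have "homT X z = s \<longleftrightarrow> z = w" for z
    unfolding w_def by (rule homT_eq_iff)
  then have homT: "s \<in> rel_interior (homT X ` C) \<longleftrightarrow> w \<in> rel_interior C" for C
    unfolding rel_interior_homT_image by (metis image_iff)
  have voronoi: "s \<in> (\<Inter>v\<in>F. far_voronoi X v) \<longleftrightarrow> F \<subseteq> farthest_points X s" if "F \<in> K" for F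
    using fp_delaunay_face_subset[OF assms(3) that]
    by (auto simp: far_voronoi_def farthest_points_def)
  have "min_power_centre X s \<longleftrightarrow> w \<in> convex hull (farthest_points X s)"
    unfolding w_def by (rule min_power_centre_iff_in_hull_farthest[OF assms(1,2)])
  also have "\<dots> \<longleftrightarrow> (\<exists>F\<in>K. w \<in> rel_interior (convex hull F) \<and> F \<subseteq> farthest_points X s)"
    using fp_delaunay_face_of_farthest[OF assms(1,3)] rel_interior_subset hull_mono by blast
  finally show ?thesis
    using homT voronoi by blast
qed

end
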